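(* Consider the second-order Kuramoto model with bonding force $$\dot\theta_i=\omega_i,\qquad \dot\omega_i=\frac{1}{N}\sum_{j=1}^N\big[\kappa_0\cos(\theta_j-\theta_i)+\kappa_1\big](\omega_j-\omega_i)+\frac{\kappa_2}{N}\sum_{j=1}^N\big[|\theta_j-\theta_i|-\theta^\infty_{ij}\big]\operatorname{sgn}(\theta_j-\theta_i),\quad i\in[N].$$ Suppose $(\Theta^0,W^0)\in\mathcal{S}$, $\mathcal{E}(0)<\frac{\kappa_2(\min_{i\ne j}\theta^\infty_{ij})^2}{2N}$, $\kappa_0\cos\mathcal{U}+\kappa_1>0$, $\kappa_2>0$, and let $\{(\theta_i,\omega_i)\}$ be a global smooth solution. Then: (i) $\lim_{t\to\infty}\max_{i,j}|\dot\theta_j(t)-\dot\theta_i(t)|=0$; (ii) if $\sum_{i=1}^N\omega_i^0=0$, then $\lim_{t\to\infty}\max_{1\le i\le N}|\omega_i(t)|=0$.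
   Context: $N\ge2$, $\kappa_0,\kappa_1\ge0$; $[\theta^\infty_{ij}]$ real symmetric with zero diagonal; $\operatorname{sgn}$ the sign function; $\omega_i^0=\omega_i(0)$. $\mathcal{E}:=\frac12\sum_i|\omega_i|^2+\frac{\kappa_2}{4N}\sum_{i,j}(|\theta_j-\theta_i|-\theta^\infty_{ij})^2$; $\mathcal{U}:=\max_{i\ne j}\theta^\infty_{ij}+\sqrt{2N\mathcal{E}(0)/\kappa_2}$; $\mathcal{S}:=\{(\Theta,W)\in\mathbb{R}^{2N}:|\theta_i-\theta_j|<\mathcal{U}<\pi\ \forall i,j\}$. *)

theory Defs
  imports "HOL-Analysis.Analysis"
begin

text \<open>Oscillators are indexed by 0..N-1; states are functions nat => real.\<close>

definition kur_energy :: "nat \<Rightarrow> real \<Rightarrow> (nat \<Rightarrow> nat \<Rightarrow> real) \<Rightarrow> (nat \<Rightarrow> real) \<Rightarrow> (nat \<Rightarrow> real) \<Rightarrow> real" where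
  "kur_energy N k2 thinf th om =
     (1/2) * (\<Sum>i<N. (om i)\<^sup>2)
     + k2 / (4 * real N) * (\<Sum>i<N. \<Sum>j<N. (\<bar>th j - th i\<bar> - thinf i j)\<^sup>2)"

definition kur_U :: "nat \<Rightarrow> real \<Rightarrow> (nat \<Rightarrow> nat \<Rightarrow> real) \<Rightarrow> real \<Rightarrow> real" where
  "kur_U N k2 thinf E0 =
     Max {thinf i j | i j. i < N \<and> j < N \<and> i \<noteq> j} + sqrt (2 * real N * E0 / k2)"

definition kur_rhs :: "nat \<Rightarrow> real \<Rightarrow> real \<Rightarrow> real \<Rightarrow> (nat \<Rightarrow> nat \<Rightarrow> real) \<Rightarrow> (nat \<Rightarrow> real) \<Rightarrow> (nat \<Rightarrow> real) \<Rightarrow> nat \<Rightarrow> real" where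
  "kur_rhs N k0 k1 k2 thinf th om i =
     (1 / real N) * (\<Sum>j<N. (k0 * cos (th j - th i) + k1) * (om j - om i))
     + (k2 / real N) * (\<Sum>j<N. (\<bar>th j - th i\<bar> - thinf i j) * sgn (th j - th i))"

end

theory Submission
  imports Defs
begin

(* Along a solution the energy E satisfies
     E' = - 1/(2N) * sum_{i,j} (k0 cos(th_j - th_i) + k1) (om_j - om_i)^2
   as long as no two phases coincide: the velocity coupling is symmetric and the bonding
   force antisymmetric in (i, j). While E <= E(0), every bond deviation
   | |th_j - th_i| - thinf_ij | is at most sqrt(2N E(0)/k2), which the hypothesis on E(0)
   makes smaller than min thinf; hence the phases stay distinct, |th_j - th_i| <= U < pi, and
   all weights are at least k0 cos U + k1 > 0, so E keeps decreasing. A continuity argument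
   therefore gives E <= E(0) for all time. The dissipation then dominates each (om_j - om_i)^2
   and the om_i are uniformly Lipschitz, so a Barbalat-type argument forces om_j - om_i -> 0.
   Finally sum_i om_i is conserved, and if it vanishes, om_i = 1/N sum_j (om_i - om_j) -> 0. *)

section \<open>Calculus on the half-line\<close>

lemma has_real_derivative_abs:
  fixes x :: real
  assumes "x \<noteq> 0"
  shows "(abs has_real_derivative sgn x) (at x)"
proof -
  have "(norm has_real_derivative sgn x) (at x)"
    by (rule has_derivative_imp_has_field_derivative[OF has_derivative_norm[OF assms]]) simp
  then show ?thesis by (simp add: real_norm_def[abs_def])
qed

lemma DERIV_le_imp_le_linear:
  fixes f f' :: "real \<Rightarrow> real"
  assumes "a \<le> b" and "continuous_on {a..b} f"
    and "\<And>x. a < x \<Longrightarrow> x < b \<Longrightarrow> (f has_real_derivative f' x) (at x)"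
    and "\<And>x. a < x \<Longrightarrow> x < b \<Longrightarrow> f' x \<le> c"
  shows "f b \<le> f a + c * (b - a)"
proof -
  have "(\<lambda>x. f x - c * x) b \<le> (\<lambda>x. f x - c * x) a"
  proof (rule DERIV_nonpos_imp_decreasing_open[OF \<open>a \<le> b\<close>])
    fix x assume "a < x" "x < b"
    then show "\<exists>y. ((\<lambda>x. f x - c * x) has_real_derivative y) (at x) \<and> y \<le> 0"
      using assms(3,4) by (intro exI conjI derivative_eq_intros) auto
  qed (intro continuous_intros assms(2))
  then show ?thesis by (simp add: algebra_simps)
qed

lemma le_initial_if_locally_nonincreasing:
  fixes f :: "real \<Rightarrow> real"
  assumes cont: "continuous_on {0..} f"
    and near: "\<And>t. 0 \<le> t \<Longrightarrow> f t \<le> f 0 \<Longrightarrow>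
      \<forall>\<^sub>F s in at_right t. \<exists>y. (f has_real_derivative y) (at s) \<and> y \<le> 0"
    and "0 \<le> t"
  shows "f t \<le> f 0"
proof (rule ccontr)
  assume "\<not> f t \<le> f 0"
  define S where "S = {0..t} \<inter> f -` {..f 0}"
  have "closed S"
    unfolding S_def by (intro continuous_closed_preimage continuous_on_subset[OF cont]) auto
  moreover have "0 \<in> S" "bdd_above S" using \<open>0 \<le> t\<close> by (auto simp: S_def)
  ultimately have "Sup S \<in> S" by (auto intro: closed_contains_Sup)
  then have s0: "0 \<le> Sup S" "Sup S < t" "f (Sup S) \<le> f 0"
    using \<open>\<not> f t \<le> f 0\<close> by (auto simp: S_def less_le)
  obtain b where "Sup S < b"
    and nonincr: "\<And>x. Sup S < x \<Longrightarrow> x < b \<Longrightarrow> \<exists>y. (f has_real_derivative y) (at x) \<and> y \<le> 0"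
    using near[OF s0(1,3)] by (auto simp: eventually_at_right_field)
  define s1 where "s1 = min b t"
  have "Sup S < s1" "s1 \<le> t" using \<open>Sup S < b\<close> s0 by (auto simp: s1_def)
  have "f s1 \<le> f (Sup S)"
  proof (rule DERIV_nonpos_imp_decreasing_open[of "Sup S" s1 f])
    show "continuous_on {Sup S..s1} f"
      using s0 by (intro continuous_on_subset[OF cont]) auto
  qed (use \<open>Sup S < s1\<close> nonincr s1_def in auto)
  then have "s1 \<in> S" using s0 \<open>Sup S < s1\<close> \<open>s1 \<le> t\<close> by (auto simp: S_def)
  then have "s1 \<le> Sup S" using \<open>bdd_above S\<close> by (rule cSup_upper)
  then show False using \<open>Sup S < s1\<close> by simp
qed

lemma tendsto_zero_of_dissipation:
  fixes V V' f :: "real \<Rightarrow> real"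
  assumes V_cont: "continuous_on {0..} V"
    and V_deriv: "\<And>t. 0 < t \<Longrightarrow> (V has_real_derivative V' t) (at t)"
    and dissip: "\<And>t. 0 < t \<Longrightarrow> V' t \<le> - a * (f t)\<^sup>2"
    and "0 < a"
    and V_bdd: "\<And>t. 0 \<le> t \<Longrightarrow> b \<le> V t"
    and lip: "\<And>s t. 0 \<le> s \<Longrightarrow> 0 \<le> t \<Longrightarrow> \<bar>f s - f t\<bar> \<le> L * \<bar>s - t\<bar>"
  shows "(f \<longlongrightarrow> 0) at_top"
proof (rule tendstoI)
  fix \<epsilon> :: real assume "0 < \<epsilon>"
  define \<delta> where "\<delta> = \<epsilon> / (2 * (\<bar>L\<bar> + 1))"
  define c where "c = a * (\<epsilon> / 2)\<^sup>2"
  have "0 < \<delta>" "0 < c" using \<open>0 < \<epsilon>\<close> \<open>0 < a\<close> by (simp_all add: \<delta>_def c_def)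
  \<comment> \<open>If \<open>|f t| \<ge> \<epsilon>\<close>, the Lipschitz bound keeps \<open>|f| \<ge> \<epsilon>/2\<close> on \<open>[t, t + \<delta>]\<close>, so \<open>V\<close> drops by \<open>c \<delta>\<close>;
    this can only happen while \<open>V\<close> is still \<open>c \<delta>\<close> above its infimum.\<close>
  have V_step: "V (t + \<delta>) \<le> V t + (- c) * (t + \<delta> - t)" if "0 \<le> t" "\<epsilon> \<le> \<bar>f t\<bar>" for t
  proof (rule DERIV_le_imp_le_linear[where f' = V'])
    show "continuous_on {t..t + \<delta>} V" using \<open>0 \<le> t\<close> by (intro continuous_on_subset[OF V_cont]) auto
    fix s assume s: "t < s" "s < t + \<delta>"
    then show "(V has_real_derivative V' s) (at s)" using \<open>0 \<le> t\<close> by (intro V_deriv) simp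
    have "L * \<bar>s - t\<bar> \<le> \<bar>L\<bar> * \<delta>" using s by (intro mult_mono) auto
    then have "\<bar>f s - f t\<bar> \<le> \<bar>L\<bar> * \<delta>" using lip[of s t] s \<open>0 \<le> t\<close> by simp
    also have "\<bar>L\<bar> * \<delta> \<le> \<epsilon> / 2"
      using \<open>0 < \<epsilon>\<close> by (simp add: \<delta>_def field_simps)
    finally have "\<epsilon> / 2 \<le> \<bar>f s\<bar>" using \<open>\<epsilon> \<le> \<bar>f t\<bar>\<close> by linarith
    then have "(\<epsilon> / 2)\<^sup>2 \<le> (f s)\<^sup>2"
      using \<open>0 < \<epsilon>\<close> by (metis abs_le_square_iff abs_of_pos half_gt_zero)
    then have "c \<le> a * (f s)\<^sup>2"
      unfolding c_def using \<open>0 < a\<close> by (intro mult_left_mono) auto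
    then show "V' s \<le> - c" using dissip[of s] s \<open>0 \<le> t\<close> by linarith
  qed (use \<open>0 < \<delta>\<close> in simp)
  have V_antitone: "V t \<le> V s" if "0 \<le> s" "s \<le> t" for s t
  proof -
    have "V t \<le> V s + 0 * (t - s)"
    proof (rule DERIV_le_imp_le_linear[where f' = V'])
      show "continuous_on {s..t} V" using \<open>0 \<le> s\<close> by (intro continuous_on_subset[OF V_cont]) auto
      fix x assume "s < x"
      then show "(V has_real_derivative V' x) (at x)" "V' x \<le> 0"
        using \<open>0 \<le> s\<close> V_deriv dissip[of x] \<open>0 < a\<close> by (auto intro: order.trans)
    qed (rule \<open>s \<le> t\<close>)
    then show ?thesis by simp
  qed
  define V_inf where "V_inf = Inf (V ` {0..})"
  have "bdd_below (V ` {0..})" using V_bdd by (intro bdd_belowI[of _ b]) auto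
  then have V_inf_le: "V_inf \<le> V t" if "0 \<le> t" for t
    using that unfolding V_inf_def by (auto intro: cInf_lower)
  obtain T where "0 \<le> T" "V T < V_inf + c * \<delta>"
    using cInf_lessD[of "V ` {0..}" "V_inf + c * \<delta>"] \<open>0 < c\<close> \<open>0 < \<delta>\<close>
    unfolding V_inf_def by auto
  have "\<bar>f t\<bar> < \<epsilon>" if "T \<le> t" for t
  proof (rule ccontr)
    assume "\<not> \<bar>f t\<bar> < \<epsilon>"
    then have "V (t + \<delta>) \<le> V T - c * \<delta>"
      using V_step[of t] V_antitone[of T t] \<open>0 \<le> T\<close> \<open>T \<le> t\<close> by simp
    then show False using V_inf_le[of "t + \<delta>"] \<open>0 \<le> T\<close> \<open>T \<le> t\<close> \<open>0 < \<delta>\<close> \<open>V T < _\<close> by simp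
  qed
  then show "\<forall>\<^sub>F t in at_top. dist (f t) 0 < \<epsilon>"
    by (auto simp: eventually_at_top_linorder)
qed

lemma tendsto_Max_abs_zero:
  fixes f :: "'i \<Rightarrow> 'a \<Rightarrow> real"
  assumes "finite I" and "I \<noteq> {}" and "\<And>i. i \<in> I \<Longrightarrow> (f i \<longlongrightarrow> 0) F"
  shows "((\<lambda>x. Max ((\<lambda>i. \<bar>f i x\<bar>) ` I)) \<longlongrightarrow> 0) F"
proof (rule tendsto_sandwich)
  obtain i where "i \<in> I" using assms(2) by blast
  then show "\<forall>\<^sub>F x in F. 0 \<le> Max ((\<lambda>i. \<bar>f i x\<bar>) ` I)"
    using assms(1) by (intro always_eventually allI Max_ge_iff[THEN iffD2]) auto
  show "\<forall>\<^sub>F x in F. Max ((\<lambda>i. \<bar>f i x\<bar>) ` I) \<le> (\<Sum>i\<in>I. \<bar>f i x\<bar>)"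
    using assms(1,2) by (intro always_eventually allI) (auto intro: member_le_sum)
  show "((\<lambda>x. \<Sum>i\<in>I. \<bar>f i x\<bar>) \<longlongrightarrow> 0) F"
    using tendsto_sum[of I "\<lambda>i x. \<bar>f i x\<bar>" "\<lambda>_. 0"] assms(3) tendsto_rabs_zero by auto
qed simp

section \<open>Antisymmetric double sums\<close>

lemma sum_sum_antisym_eq_0:
  fixes F :: "'a \<Rightarrow> 'a \<Rightarrow> 'b::linordered_ab_group_add"
  assumes "\<And>i j. i \<in> I \<Longrightarrow> j \<in> I \<Longrightarrow> F j i = - F i j"
  shows "(\<Sum>i\<in>I. \<Sum>j\<in>I. F i j) = 0"
proof -
  have "(\<Sum>i\<in>I. \<Sum>j\<in>I. F i j) = (\<Sum>j\<in>I. \<Sum>i\<in>I. F i j)" by (rule sum.swap)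
  also have "\<dots> = (\<Sum>j\<in>I. \<Sum>i\<in>I. - F j i)" by (intro sum.cong refl assms)
  also have "\<dots> = - (\<Sum>j\<in>I. \<Sum>i\<in>I. F j i)" by (simp add: sum_negf)
  finally show ?thesis by simp
qed

lemma sum_sum_antisym_mult:
  fixes F :: "'a \<Rightarrow> 'a \<Rightarrow> 'b::linordered_field"
  assumes "\<And>i j. i \<in> I \<Longrightarrow> j \<in> I \<Longrightarrow> F j i = - F i j"
  shows "(\<Sum>i\<in>I. \<Sum>j\<in>I. F i j * x i) = - (\<Sum>i\<in>I. \<Sum>j\<in>I. F i j * (x j - x i)) / 2"
proof -
  have "(\<Sum>i\<in>I. \<Sum>j\<in>I. F i j * (x i + x j)) = 0"
  proof (rule sum_sum_antisym_eq_0)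
    fix i j assume "i \<in> I" "j \<in> I"
    then show "F j i * (x j + x i) = - (F i j * (x i + x j))"
      using assms[of i j] by (simp add: algebra_simps)
  qed
  then show ?thesis
    by (simp add: distrib_left right_diff_distrib sum.distrib sum_subtractf)
qed

lemma abs_scaled_sum_le:
  fixes x :: "nat \<Rightarrow> real"
  assumes "0 < N" and "\<And>j. j < N \<Longrightarrow> \<bar>x j\<bar> \<le> B"
  shows "\<bar>c / real N * (\<Sum>j<N. x j)\<bar> \<le> \<bar>c\<bar> * B"
proof -
  have "\<bar>\<Sum>j<N. x j\<bar> \<le> (\<Sum>j<N. \<bar>x j\<bar>)" by (rule sum_abs)
  also have "\<dots> \<le> real N * B" using sum_bounded_above[of "{..<N}" "\<lambda>j. \<bar>x j\<bar>" B] assms(2) by simp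
  finally have "\<bar>c\<bar> * \<bar>\<Sum>j<N. x j\<bar> \<le> \<bar>c\<bar> * (real N * B)" by (rule mult_left_mono) simp
  then show ?thesis using assms(1) by (simp add: abs_mult field_simps)
qed

section \<open>Pair interactions of the model\<close>

definition kur_weight :: "real \<Rightarrow> real \<Rightarrow> (nat \<Rightarrow> real) \<Rightarrow> nat \<Rightarrow> nat \<Rightarrow> real" where
  "kur_weight k0 k1 th i j = k0 * cos (th j - th i) + k1"

definition kur_force :: "(nat \<Rightarrow> nat \<Rightarrow> real) \<Rightarrow> (nat \<Rightarrow> real) \<Rightarrow> nat \<Rightarrow> nat \<Rightarrow> real" where
  "kur_force thinf th i j = (\<bar>th j - th i\<bar> - thinf i j) * sgn (th j - th i)"

lemma kur_rhs_eq:
  "kur_rhs N k0 k1 k2 thinf th om i =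
     1 / real N * (\<Sum>j<N. kur_weight k0 k1 th i j * (om j - om i))
     + k2 / real N * (\<Sum>j<N. kur_force thinf th i j)"
  unfolding kur_rhs_def kur_weight_def kur_force_def ..

lemma kur_weight_commute: "kur_weight k0 k1 th j i = kur_weight k0 k1 th i j"
  unfolding kur_weight_def by (metis cos_minus minus_diff_eq)

lemma kur_force_antisym:
  assumes "thinf j i = thinf i j"
  shows "kur_force thinf th j i = - kur_force thinf th i j"
  unfolding kur_force_def assms by (metis abs_minus_commute minus_diff_eq mult_minus_right sgn_minus)

lemma sum_kur_rhs_eq_0:
  assumes sym: "\<And>i j. i < N \<Longrightarrow> j < N \<Longrightarrow> thinf j i = thinf i j"
  shows "(\<Sum>i<N. kur_rhs N k0 k1 k2 thinf th om i) = 0"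
proof -
  have "(\<Sum>i<N. \<Sum>j<N. kur_weight k0 k1 th i j * (om j - om i)) = 0"
    by (rule sum_sum_antisym_eq_0) (simp add: kur_weight_commute algebra_simps)
  moreover have "(\<Sum>i<N. \<Sum>j<N. kur_force thinf th i j) = 0"
    by (rule sum_sum_antisym_eq_0) (auto intro: kur_force_antisym sym)
  moreover have "(\<Sum>i<N. kur_rhs N k0 k1 k2 thinf th om i)
      = 1 / real N * (\<Sum>i<N. \<Sum>j<N. kur_weight k0 k1 th i j * (om j - om i))
        + k2 / real N * (\<Sum>i<N. \<Sum>j<N. kur_force thinf th i j)"
    by (simp add: kur_rhs_eq sum.distrib sum_distrib_left)
  ultimately show ?thesis by simp
qed

lemma kur_energy_dissipation:
  assumes sym: "\<And>i j. i < N \<Longrightarrow> j < N \<Longrightarrow> thinf j i = thinf i j"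
  shows "(\<Sum>i<N. om i * kur_rhs N k0 k1 k2 thinf th om i)
           + k2 / (2 * real N) * (\<Sum>i<N. \<Sum>j<N. kur_force thinf th i j * (om j - om i))
         = - (\<Sum>i<N. \<Sum>j<N. kur_weight k0 k1 th i j * (om j - om i)\<^sup>2) / (2 * real N)"
proof -
  define A where "A = (\<Sum>i<N. \<Sum>j<N. kur_weight k0 k1 th i j * (om j - om i)\<^sup>2)"
  define B where "B = (\<Sum>i<N. \<Sum>j<N. kur_force thinf th i j * (om j - om i))"
  have weight_sum: "(\<Sum>i<N. \<Sum>j<N. kur_weight k0 k1 th i j * (om j - om i) * om i) = - A / 2"
    unfolding A_def by (subst sum_sum_antisym_mult)
      (simp_all add: kur_weight_commute algebra_simps power2_eq_square)
  have force_sum: "(\<Sum>i<N. \<Sum>j<N. kur_force thinf th i j * om i) = - B / 2"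
    unfolding B_def by (rule sum_sum_antisym_mult) (auto intro: kur_force_antisym sym)
  have "(\<Sum>i<N. om i * kur_rhs N k0 k1 k2 thinf th om i)
      = 1 / real N * (\<Sum>i<N. \<Sum>j<N. kur_weight k0 k1 th i j * (om j - om i) * om i)
        + k2 / real N * (\<Sum>i<N. \<Sum>j<N. kur_force thinf th i j * om i)"
    by (simp add: kur_rhs_eq distrib_left sum.distrib sum_distrib_left sum_distrib_right mult_ac)
  also have "\<dots> = 1 / real N * (- A / 2) + k2 / real N * (- B / 2)"
    by (simp only: weight_sum force_sum)
  finally show ?thesis
    unfolding A_def[symmetric] B_def[symmetric] by (cases "N = 0") (simp_all add: field_simps)
qed

lemma kur_energy_nonneg:
  assumes "0 \<le> k2"
  shows "0 \<le> kur_energy N k2 thinf th om"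
  unfolding kur_energy_def using assms by (intro add_nonneg_nonneg mult_nonneg_nonneg sum_nonneg) auto

lemma om_sq_le_kur_energy:
  assumes "0 \<le> k2" and "i < N"
  shows "(om i)\<^sup>2 \<le> 2 * kur_energy N k2 thinf th om"
proof -
  have "(om i)\<^sup>2 \<le> (\<Sum>i<N. (om i)\<^sup>2)" using \<open>i < N\<close> by (intro member_le_sum) auto
  moreover have "0 \<le> k2 / (4 * real N) * (\<Sum>i<N. \<Sum>j<N. (\<bar>th j - th i\<bar> - thinf i j)\<^sup>2)"
    using assms by (intro mult_nonneg_nonneg sum_nonneg) auto
  ultimately show ?thesis unfolding kur_energy_def by simp
qed

lemma bond_sq_le_kur_energy:
  assumes "0 < k2" and sym: "\<And>i j. i < N \<Longrightarrow> j < N \<Longrightarrow> thinf j i = thinf i j"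
    and "i < N" "j < N" "i \<noteq> j"
  shows "(\<bar>th j - th i\<bar> - thinf i j)\<^sup>2 \<le> 2 * real N * kur_energy N k2 thinf th om / k2"
proof -
  define b where "b i j = (\<bar>th j - th i\<bar> - thinf i j)\<^sup>2" for i j
  have "b j i = b i j" using sym[of i j] assms(3,4) by (simp add: b_def abs_minus_commute)
  then have "2 * b i j = b i j + b j i" by simp
  also have "\<dots> \<le> (\<Sum>j'<N. b i j') + (\<Sum>j'<N. b j j')"
    using assms(3,4) by (intro add_mono member_le_sum) (auto simp: b_def)
  also have "\<dots> = (\<Sum>i'\<in>{i, j}. \<Sum>j'<N. b i' j')" using \<open>i \<noteq> j\<close> by simp
  also have "\<dots> \<le> (\<Sum>i'<N. \<Sum>j'<N. b i' j')"
    using assms(3,4) by (intro sum_mono2 sum_nonneg) (auto simp: b_def)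
  also have "\<dots> \<le> 2 * (2 * real N * kur_energy N k2 thinf th om / k2)"
  proof -
    have "k2 / (4 * real N) * (\<Sum>i'<N. \<Sum>j'<N. b i' j') \<le> kur_energy N k2 thinf th om"
      unfolding kur_energy_def b_def by (simp add: sum_nonneg)
    then show ?thesis using \<open>0 < k2\<close> \<open>i < N\<close> by (simp add: field_simps)
  qed
  finally show ?thesis by (simp add: b_def)
qed

section \<open>Energy estimates along solutions\<close>

locale kuramoto_solution =
  fixes N :: nat and k0 k1 k2 :: real
    and thinf :: "nat \<Rightarrow> nat \<Rightarrow> real"
    and th om :: "real \<Rightarrow> nat \<Rightarrow> real"
  assumes sym: "\<forall>i<N. \<forall>j<N. thinf i j = thinf j i"
    and ode_th: "\<forall>i<N. \<forall>t\<ge>0. ((\<lambda>s. th s i) has_real_derivative om t i) (at t within {0..})"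
    and ode_om: "\<forall>i<N. \<forall>t\<ge>0. ((\<lambda>s. om s i) has_real_derivative
                   kur_rhs N k0 k1 k2 thinf (th t) (om t) i) (at t within {0..})"
begin

definition energy :: "real \<Rightarrow> real" where
  "energy t = kur_energy N k2 thinf (th t) (om t)"

definition dissipation :: "real \<Rightarrow> real" where
  "dissipation t =
     (\<Sum>i<N. \<Sum>j<N. kur_weight k0 k1 (th t) i j * (om t j - om t i)\<^sup>2) / (2 * real N)"

lemma thinf_commute: "i < N \<Longrightarrow> j < N \<Longrightarrow> thinf j i = thinf i j"
  using sym by simp

lemma th_has_derivative: "i < N \<Longrightarrow> 0 < t \<Longrightarrow> ((\<lambda>s. th s i) has_real_derivative om t i) (at t)"
  using ode_th[rule_format, of i t] at_within_interior[of t "{0..}"] by simp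

lemma om_has_derivative:
  "i < N \<Longrightarrow> 0 < t \<Longrightarrow>
     ((\<lambda>s. om s i) has_real_derivative kur_rhs N k0 k1 k2 thinf (th t) (om t) i) (at t)"
  using ode_om[rule_format, of i t] at_within_interior[of t "{0..}"] by simp

lemma continuous_on_th: "i < N \<Longrightarrow> continuous_on {0..} (\<lambda>s. th s i)"
  using ode_th by (auto simp: continuous_on_eq_continuous_within intro: DERIV_continuous)

lemma continuous_on_om: "i < N \<Longrightarrow> continuous_on {0..} (\<lambda>s. om s i)"
  using ode_om by (auto simp: continuous_on_eq_continuous_within intro: DERIV_continuous)

lemma tendsto_th_at_right:
  assumes "i < N" "0 \<le> t"
  shows "((\<lambda>s. th s i) \<longlongrightarrow> th t i) (at_right t)"
proof (rule tendsto_within_subset)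
  show "((\<lambda>s. th s i) \<longlongrightarrow> th t i) (at t within {0..})"
    using continuous_on_th[OF assms(1)] assms(2) by (simp add: continuous_on_def)
qed (use assms(2) in auto)

lemma continuous_on_energy: "continuous_on {0..} energy"
  unfolding energy_def[abs_def] kur_energy_def
  by (intro continuous_intros continuous_on_th continuous_on_om) auto

lemma sum_om_eq_initial:
  assumes "0 \<le> t"
  shows "(\<Sum>i<N. om t i) = (\<Sum>i<N. om 0 i)"
proof -
  have "((\<lambda>s. \<Sum>i<N. om s i) has_real_derivative 0) (at s within {0..})" if "s \<in> {0..}" for s
  proof -
    have "((\<lambda>s. \<Sum>i<N. om s i) has_real_derivative
        (\<Sum>i<N. kur_rhs N k0 k1 k2 thinf (th s) (om s) i)) (at s within {0..})"
      using ode_om that by (intro DERIV_sum) simp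
    moreover have "(\<Sum>i<N. kur_rhs N k0 k1 k2 thinf (th s) (om s) i) = 0"
      by (rule sum_kur_rhs_eq_0) (rule thinf_commute)
    ultimately show ?thesis by simp
  qed
  then obtain c where "\<forall>s\<in>{0..}. (\<Sum>i<N. om s i) = c"
    using has_field_derivative_zero_constant[OF convex_real_interval(1)] by blast
  then show ?thesis using assms by simp
qed

lemma om_lipschitz:
  assumes "\<And>t. 0 \<le> t \<Longrightarrow> \<bar>kur_rhs N k0 k1 k2 thinf (th t) (om t) i\<bar> \<le> M"
    and "i < N" "0 \<le> s" "0 \<le> t"
  shows "\<bar>om s i - om t i\<bar> \<le> M * \<bar>s - t\<bar>"
proof -
  have "norm (om s i - om t i) \<le> M * norm (s - t)"
    by (rule field_differentiable_bound[where S = "{0..}" and f = "\<lambda>s. om s i"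
          and f' = "\<lambda>t. kur_rhs N k0 k1 k2 thinf (th t) (om t) i"])
      (use ode_om assms in auto)
  then show ?thesis by simp
qed

lemma bond_has_derivative:
  assumes "0 < t" "i < N" "j < N" and "i = j \<or> th t j \<noteq> th t i"
  shows "((\<lambda>s. (\<bar>th s j - th s i\<bar> - thinf i j)\<^sup>2) has_real_derivative
           2 * kur_force thinf (th t) i j * (om t j - om t i)) (at t)"
  using assms(4)
proof
  assume "i = j"
  then show ?thesis by (simp add: kur_force_def)
next
  assume "th t j \<noteq> th t i"
  have "((\<lambda>s. th s j - th s i) has_real_derivative om t j - om t i) (at t)"
    using assms(1-3) by (intro DERIV_diff th_has_derivative)
  from DERIV_chain2[OF has_real_derivative_abs this] \<open>th t j \<noteq> th t i\<close>
  have "((\<lambda>s. \<bar>th s j - th s i\<bar>) has_real_derivative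
          sgn (th t j - th t i) * (om t j - om t i)) (at t)"
    by simp
  from DERIV_power[OF DERIV_diff[OF this DERIV_const], where n = 2]
  show ?thesis by (rule DERIV_cong) (simp add: kur_force_def)
qed

lemma energy_has_derivative:
  assumes "0 < t" and distinct: "\<And>i j. i < N \<Longrightarrow> j < N \<Longrightarrow> i \<noteq> j \<Longrightarrow> th t j \<noteq> th t i"
  shows "(energy has_real_derivative - dissipation t) (at t)"
proof -
  let ?r = "kur_rhs N k0 k1 k2 thinf (th t) (om t)"
  let ?F = "kur_force thinf (th t)"
  have om_sq: "((\<lambda>s. (om s i)\<^sup>2) has_real_derivative 2 * (om t i * ?r i)) (at t)" if "i < N" for i
    by (rule DERIV_cong[OF DERIV_power[OF om_has_derivative[OF that \<open>0 < t\<close>]]]) simp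
  have deriv: "(energy has_real_derivative
      1/2 * (\<Sum>i<N. 2 * (om t i * ?r i))
      + k2 / (4 * real N) * (\<Sum>i<N. \<Sum>j<N. 2 * ?F i j * (om t j - om t i))) (at t)"
    unfolding energy_def[abs_def] kur_energy_def
    using \<open>0 < t\<close> distinct
    by (intro DERIV_add DERIV_cmult DERIV_sum om_sq bond_has_derivative) auto
  have "1/2 * (\<Sum>i<N. 2 * (om t i * ?r i))
      + k2 / (4 * real N) * (\<Sum>i<N. \<Sum>j<N. 2 * ?F i j * (om t j - om t i))
      = (\<Sum>i<N. om t i * ?r i) + k2 / (2 * real N) * (\<Sum>i<N. \<Sum>j<N. ?F i j * (om t j - om t i))"
  proof -
    have "(\<Sum>i<N. 2 * (om t i * ?r i)) = 2 * (\<Sum>i<N. om t i * ?r i)"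
      by (rule sum_distrib_left[symmetric])
    moreover have "(\<Sum>i<N. \<Sum>j<N. 2 * ?F i j * (om t j - om t i))
        = 2 * (\<Sum>i<N. \<Sum>j<N. ?F i j * (om t j - om t i))"
      by (simp add: sum_distrib_left mult.assoc)
    ultimately show ?thesis by (cases "N = 0") (simp_all add: field_simps)
  qed
  also have "\<dots> = - dissipation t"
    unfolding dissipation_def minus_divide_left by (rule kur_energy_dissipation) (rule thinf_commute)
  finally show ?thesis by (rule DERIV_cong[OF deriv])
qed

lemma dissipation_nonneg:
  assumes "\<And>i j. i < N \<Longrightarrow> j < N \<Longrightarrow> i \<noteq> j \<Longrightarrow> 0 \<le> kur_weight k0 k1 (th t) i j"
  shows "0 \<le> dissipation t"
  unfolding dissipation_def
proof (intro divide_nonneg_nonneg sum_nonneg)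
  fix i j assume "i \<in> {..<N}" "j \<in> {..<N}"
  then show "0 \<le> kur_weight k0 k1 (th t) i j * (om t j - om t i)\<^sup>2"
    using assms[of i j] by (cases "i = j") auto
qed simp

end

locale kuramoto_small_energy = kuramoto_solution +
  assumes N2: "N \<ge> 2"
    and k0: "k0 \<ge> 0" and k1: "k1 \<ge> 0" and k2: "k2 > 0"
    and U_pi: "kur_U N k2 thinf (kur_energy N k2 thinf (th 0) (om 0)) < pi"
    and E0: "kur_energy N k2 thinf (th 0) (om 0)
               < k2 * (Min {thinf i j | i j. i < N \<and> j < N \<and> i \<noteq> j})\<^sup>2 / (2 * real N)"
    and coup: "k0 * cos (kur_U N k2 thinf (kur_energy N k2 thinf (th 0) (om 0))) + k1 > 0"
begin

definition rest_lengths :: "real set" where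
  "rest_lengths = {thinf i j | i j. i < N \<and> j < N \<and> i \<noteq> j}"

definition radius :: real where
  "radius = sqrt (2 * real N * energy 0 / k2)"

abbreviation U :: real where
  "U \<equiv> kur_U N k2 thinf (energy 0)"

lemma U_eq: "U = Max rest_lengths + radius"
  by (simp add: kur_U_def rest_lengths_def radius_def)

lemma finite_rest_lengths: "finite rest_lengths"
  unfolding rest_lengths_def by (rule finite_subset[of _ "(\<lambda>(i, j). thinf i j) ` ({..<N} \<times> {..<N})"]) auto

lemma rest_lengths_ne: "rest_lengths \<noteq> {}"
proof -
  have "thinf 0 1 \<in> rest_lengths" using N2 unfolding rest_lengths_def by force
  then show ?thesis by blast
qed

lemma energy_nonneg: "0 \<le> energy t"
  unfolding energy_def using k2 by (intro kur_energy_nonneg) simp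

lemma radius_nonneg: "0 \<le> radius"
  unfolding radius_def using k2 energy_nonneg[of 0] by simp

lemma bond_deviation_le_radius:
  assumes "energy t \<le> energy 0" "i < N" "j < N" "i \<noteq> j"
  shows "\<bar>\<bar>th t j - th t i\<bar> - thinf i j\<bar> \<le> radius"
proof -
  have "(\<bar>th t j - th t i\<bar> - thinf i j)\<^sup>2 \<le> 2 * real N * energy t / k2"
    unfolding energy_def using k2 thinf_commute assms(2-4) by (rule bond_sq_le_kur_energy)
  also have "\<dots> \<le> 2 * real N * energy 0 / k2"
    using assms(1) k2 by (intro divide_right_mono mult_left_mono) auto
  finally have "sqrt ((\<bar>th t j - th t i\<bar> - thinf i j)\<^sup>2) \<le> radius"
    unfolding radius_def by (rule real_sqrt_le_mono)
  then show ?thesis by simp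
qed

lemma radius_less_Min: "radius < Min rest_lengths"
proof -
  let ?m = "Min rest_lengths"
  obtain i j where ij: "i < N" "j < N" "i \<noteq> j" "thinf i j = ?m"
    using Min_in[OF finite_rest_lengths rest_lengths_ne] by (auto simp: rest_lengths_def)
  have "0 < real N" using N2 by simp
  have "energy 0 < k2 * ?m\<^sup>2 / (2 * real N)"
    using E0 by (simp add: energy_def rest_lengths_def)
  then have "2 * real N * energy 0 / k2 < ?m\<^sup>2"
    using \<open>0 < real N\<close> k2 by (simp add: field_simps)
  moreover have "radius\<^sup>2 = 2 * real N * energy 0 / k2"
    unfolding radius_def using k2 energy_nonneg[of 0] by (intro real_sqrt_pow2) simp
  ultimately have "radius\<^sup>2 < \<bar>?m\<bar>\<^sup>2" by simp
  then have "radius < \<bar>?m\<bar>" by (rule power2_less_imp_less) simp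
  \<comment> \<open>The bound at time 0 for a pair realising the minimum rules out \<open>?m \<le> 0\<close>.\<close>
  moreover have "\<bar>\<bar>th 0 j - th 0 i\<bar> - ?m\<bar> \<le> radius"
    using bond_deviation_le_radius[of 0 i j] ij by simp
  ultimately show ?thesis by (cases "?m < 0") auto
qed

lemma bond_length_bounds:
  assumes "energy t \<le> energy 0" "i < N" "j < N" "i \<noteq> j"
  shows "0 < \<bar>th t j - th t i\<bar>" and "\<bar>th t j - th t i\<bar> \<le> U"
proof -
  have "thinf i j \<in> rest_lengths" using assms(2-4) by (auto simp: rest_lengths_def)
  then have "Min rest_lengths \<le> thinf i j" "thinf i j \<le> Max rest_lengths"
    using finite_rest_lengths by (auto intro: Min_le Max_ge)
  then show "0 < \<bar>th t j - th t i\<bar>" "\<bar>th t j - th t i\<bar> \<le> U"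
    using bond_deviation_le_radius[OF assms] radius_less_Min radius_nonneg unfolding U_eq
    by linarith+
qed

lemma U_pos: "0 < U"
proof -
  have "0 < N" "1 < N" using N2 by auto
  then show ?thesis using bond_length_bounds[of 0 0 1] by simp
qed

lemma weight_ge:
  assumes "energy t \<le> energy 0" "i < N" "j < N"
  shows "k0 * cos U + k1 \<le> kur_weight k0 k1 (th t) i j"
proof -
  have "\<bar>th t j - th t i\<bar> \<le> U"
    using bond_length_bounds(2)[OF assms] U_pos by (cases "i = j") auto
  then have "cos U \<le> cos \<bar>th t j - th t i\<bar>"
    using U_pos U_pi by (subst cos_mono_le_eq) (auto simp: energy_def)
  then show ?thesis using k0 by (simp add: kur_weight_def mult_left_mono)
qed

lemma weight_min_pos: "0 < k0 * cos U + k1"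
  using coup by (simp add: energy_def)

lemma energy_locally_nonincreasing:
  assumes "0 \<le> t" "energy t \<le> energy 0"
  shows "\<forall>\<^sub>F s in at_right t. \<exists>y. (energy has_real_derivative y) (at s) \<and> y \<le> 0"
proof -
  have "\<forall>\<^sub>F s in at_right t. i \<noteq> j \<longrightarrow> th s j \<noteq> th s i \<and> 0 < kur_weight k0 k1 (th s) i j"
    if "i < N" "j < N" for i j
  proof (cases "i = j")
    case False
    have lim: "((\<lambda>s. th s j - th s i) \<longlongrightarrow> th t j - th t i) (at_right t)"
      using that \<open>0 \<le> t\<close> by (intro tendsto_diff tendsto_th_at_right)
    have ne: "th t j - th t i \<noteq> 0" and pos: "0 < kur_weight k0 k1 (th t) i j"
      using bond_length_bounds(1)[OF assms(2) that False] weight_ge[OF assms(2) that]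
        weight_min_pos
      by auto
    have "((\<lambda>s. kur_weight k0 k1 (th s) i j) \<longlongrightarrow> kur_weight k0 k1 (th t) i j) (at_right t)"
      unfolding kur_weight_def by (intro tendsto_intros lim)
    from order_tendstoD(1)[OF this pos] tendsto_imp_eventually_ne[OF lim ne]
    show ?thesis by eventually_elim simp
  qed simp
  then have "\<forall>\<^sub>F s in at_right t. \<forall>i\<in>{..<N}. \<forall>j\<in>{..<N}.
      i \<noteq> j \<longrightarrow> th s j \<noteq> th s i \<and> 0 < kur_weight k0 k1 (th s) i j"
    by (simp add: eventually_ball_finite_distrib)
  with eventually_at_right_less show ?thesis
  proof eventually_elim
    case (elim s)
    have "0 < s" using elim \<open>0 \<le> t\<close> by simp
    moreover have "\<And>i j. i < N \<Longrightarrow> j < N \<Longrightarrow> i \<noteq> j \<Longrightarrow> th s j \<noteq> th s i"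
      using elim by simp
    ultimately have "(energy has_real_derivative - dissipation s) (at s)"
      by (rule energy_has_derivative)
    moreover have "0 \<le> dissipation s"
      by (rule dissipation_nonneg) (use elim in \<open>auto intro: less_imp_le\<close>)
    ultimately show ?case by (intro exI[of _ "- dissipation s"]) simp
  qed
qed

lemma energy_le_initial: "0 \<le> t \<Longrightarrow> energy t \<le> energy 0"
  by (rule le_initial_if_locally_nonincreasing[OF continuous_on_energy energy_locally_nonincreasing])


lemma dissipation_ge:
  assumes "0 \<le> t" "p < N" "q < N"
  shows "(k0 * cos U + k1) / (2 * real N) * (om t q - om t p)\<^sup>2 \<le> dissipation t"
proof -
  have weight: "k0 * cos U + k1 \<le> kur_weight k0 k1 (th t) i j" if "i < N" "j < N" for i j
    using weight_ge[OF energy_le_initial[OF assms(1)] that] .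
  then have terms_nonneg: "0 \<le> kur_weight k0 k1 (th t) i j * (om t j - om t i)\<^sup>2"
    if "i < N" "j < N" for i j
    using weight[OF that] weight_min_pos by simp
  have "(k0 * cos U + k1) * (om t q - om t p)\<^sup>2 \<le> kur_weight k0 k1 (th t) p q * (om t q - om t p)\<^sup>2"
    using weight[OF assms(2,3)] by (rule mult_right_mono) simp
  also have "\<dots> \<le> (\<Sum>j<N. kur_weight k0 k1 (th t) p j * (om t j - om t p)\<^sup>2)"
    using assms(2,3) terms_nonneg
    by (intro member_le_sum[where f = "\<lambda>j. kur_weight k0 k1 (th t) p j * (om t j - om t p)\<^sup>2"]) auto
  also have "\<dots> \<le> (\<Sum>i<N. \<Sum>j<N. kur_weight k0 k1 (th t) i j * (om t j - om t i)\<^sup>2)"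
    using assms(2) terms_nonneg by (intro member_le_sum sum_nonneg) auto
  finally show ?thesis
    unfolding dissipation_def using divide_right_mono by fastforce
qed

lemma om_bound:
  assumes "0 \<le> t" "i < N"
  shows "\<bar>om t i\<bar> \<le> sqrt (2 * energy 0)"
proof -
  have "(om t i)\<^sup>2 \<le> 2 * energy t"
    unfolding energy_def using k2 assms(2) by (intro om_sq_le_kur_energy) auto
  also have "\<dots> \<le> 2 * energy 0" using energy_le_initial[OF assms(1)] by simp
  finally have "sqrt ((om t i)\<^sup>2) \<le> sqrt (2 * energy 0)" by (rule real_sqrt_le_mono)
  then show ?thesis by simp
qed

lemma force_bound:
  assumes "0 \<le> t" "i < N" "j < N"
  shows "\<bar>kur_force thinf (th t) i j\<bar> \<le> radius"
proof (cases "i = j")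
  case False
  have "\<bar>kur_force thinf (th t) i j\<bar> \<le> \<bar>\<bar>th t j - th t i\<bar> - thinf i j\<bar>"
    by (simp add: kur_force_def abs_mult abs_sgn_eq)
  also have "\<dots> \<le> radius"
    using bond_deviation_le_radius[OF energy_le_initial[OF assms(1)] assms(2,3) False] .
  finally show ?thesis .
qed (simp add: kur_force_def radius_nonneg)

lemma rhs_bound:
  assumes "0 \<le> t" "i < N"
  shows "\<bar>kur_rhs N k0 k1 k2 thinf (th t) (om t) i\<bar>
           \<le> (k0 + k1) * (2 * sqrt (2 * energy 0)) + k2 * radius"
proof -
  have "\<bar>kur_weight k0 k1 (th t) i j * (om t j - om t i)\<bar> \<le> (k0 + k1) * (2 * sqrt (2 * energy 0))"
    if "j < N" for j
  proof -
    have "\<bar>k0 * cos (th t j - th t i)\<bar> \<le> k0"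
      using k0 abs_cos_le_one[of "th t j - th t i"] by (simp add: abs_mult mult_left_le)
    then have "\<bar>kur_weight k0 k1 (th t) i j\<bar> \<le> k0 + k1"
      using k1 abs_triangle_ineq[of "k0 * cos (th t j - th t i)" k1] by (simp add: kur_weight_def)
    moreover have "\<bar>om t j - om t i\<bar> \<le> 2 * sqrt (2 * energy 0)"
      using om_bound[OF assms(1) that] om_bound[OF assms] by linarith
    ultimately show ?thesis unfolding abs_mult by (intro mult_mono) auto
  qed
  then have "\<bar>1 / real N * (\<Sum>j<N. kur_weight k0 k1 (th t) i j * (om t j - om t i))\<bar>
      \<le> \<bar>1\<bar> * ((k0 + k1) * (2 * sqrt (2 * energy 0)))"
    using assms(2) by (intro abs_scaled_sum_le) auto
  moreover have "\<bar>k2 / real N * (\<Sum>j<N. kur_force thinf (th t) i j)\<bar> \<le> \<bar>k2\<bar> * radius"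
    using assms force_bound by (intro abs_scaled_sum_le) auto
  moreover note abs_triangle_ineq[of "1 / real N * (\<Sum>j<N. kur_weight k0 k1 (th t) i j * (om t j - om t i))"
      "k2 / real N * (\<Sum>j<N. kur_force thinf (th t) i j)"]
  ultimately show ?thesis unfolding kur_rhs_eq using k2 by simp
qed

lemma om_diff_tendsto_0:
  assumes "p < N" "q < N"
  shows "((\<lambda>t. om t q - om t p) \<longlongrightarrow> 0) at_top"
proof -
  define M where "M = (k0 + k1) * (2 * sqrt (2 * energy 0)) + k2 * radius"
  have lip: "\<bar>om s i - om t i\<bar> \<le> M * \<bar>s - t\<bar>" if "i < N" "0 \<le> s" "0 \<le> t" for i s t
    using om_lipschitz[OF _ that] rhs_bound that(1) unfolding M_def by blast
  show ?thesis
  proof (rule tendsto_zero_of_dissipation)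
    show "continuous_on {0..} energy" by (rule continuous_on_energy)
    fix t :: real assume "0 < t"
    then have "energy t \<le> energy 0" by (intro energy_le_initial) simp
    show "(energy has_real_derivative - dissipation t) (at t)"
    proof (rule energy_has_derivative[OF \<open>0 < t\<close>])
      fix i j assume "i < N" "j < N" "i \<noteq> j"
      then show "th t j \<noteq> th t i"
        using bond_length_bounds(1)[OF \<open>energy t \<le> energy 0\<close>] by fastforce
    qed
    show "- dissipation t \<le> - ((k0 * cos U + k1) / (2 * real N)) * (om t q - om t p)\<^sup>2"
      using dissipation_ge[of t p q] \<open>0 < t\<close> assms by simp
  next
    show "0 < (k0 * cos U + k1) / (2 * real N)" using weight_min_pos N2 by simp
    show "0 \<le> energy t" for t by (rule energy_nonneg)
    show "\<bar>om s q - om s p - (om t q - om t p)\<bar> \<le> 2 * M * \<bar>s - t\<bar>" if "0 \<le> s" "0 \<le> t" for s t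
      using lip[OF assms(1) that] lip[OF assms(2) that] by linarith
  qed
qed

lemma om_tendsto_0:
  assumes "(\<Sum>i<N. om 0 i) = 0" "i < N"
  shows "((\<lambda>t. om t i) \<longlongrightarrow> 0) at_top"
proof (rule Lim_transform_eventually)
  show "((\<lambda>t. (\<Sum>j<N. om t i - om t j) / real N) \<longlongrightarrow> 0) at_top"
  proof (rule tendsto_divide_zero)
    show "((\<lambda>t. \<Sum>j<N. om t i - om t j) \<longlongrightarrow> 0) at_top"
      using tendsto_sum[of "{..<N}" "\<lambda>j t. om t i - om t j" "\<lambda>_. 0"] om_diff_tendsto_0 assms(2)
      by simp
  qed
  have "(\<Sum>j<N. om t i - om t j) / real N = om t i" if "0 \<le> t" for t
    using sum_om_eq_initial[OF that] assms N2 by (simp add: sum_subtractf)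
  then show "\<forall>\<^sub>F t in at_top. (\<Sum>j<N. om t i - om t j) / real N = om t i"
    by (intro eventually_mono[OF eventually_ge_at_top[of 0]])
qed

end

theorem theorem3p2:
  fixes N :: nat and k0 k1 k2 :: real
    and thinf :: "nat \<Rightarrow> nat \<Rightarrow> real"
    and th om :: "real \<Rightarrow> nat \<Rightarrow> real"
  assumes N2: "N \<ge> 2"
    and k0: "k0 \<ge> 0" and k1: "k1 \<ge> 0" and k2: "k2 > 0"
    and sym: "\<forall>i<N. \<forall>j<N. thinf i j = thinf j i"
    and diag: "\<forall>i<N. thinf i i = 0"
    and ode_th: "\<forall>i<N. \<forall>t\<ge>0. ((\<lambda>s. th s i) has_real_derivative om t i) (at t within {0..})"
    and ode_om: "\<forall>i<N. \<forall>t\<ge>0. ((\<lambda>s. om s i) has_real_derivative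
                   kur_rhs N k0 k1 k2 thinf (th t) (om t) i) (at t within {0..})"
    and init_S: "\<forall>i<N. \<forall>j<N. \<bar>th 0 i - th 0 j\<bar> < kur_U N k2 thinf (kur_energy N k2 thinf (th 0) (om 0))"
    and U_pi: "kur_U N k2 thinf (kur_energy N k2 thinf (th 0) (om 0)) < pi"
    and E0: "kur_energy N k2 thinf (th 0) (om 0)
               < k2 * (Min {thinf i j | i j. i < N \<and> j < N \<and> i \<noteq> j})\<^sup>2 / (2 * real N)"
    and coup: "k0 * cos (kur_U N k2 thinf (kur_energy N k2 thinf (th 0) (om 0))) + k1 > 0"
  shows "((\<lambda>t. Max {\<bar>om t j - om t i\<bar> | i j. i < N \<and> j < N}) \<longlongrightarrow> 0) at_top
         \<and> ((\<Sum>i<N. om 0 i) = 0 \<longrightarrow> ((\<lambda>t. Max {\<bar>om t i\<bar> | i. i < N}) \<longlongrightarrow> 0) at_top)"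
proof -
  interpret kuramoto_small_energy N k0 k1 k2 thinf th om
    using N2 k0 k1 k2 sym ode_th ode_om U_pi E0 coup by unfold_locales
  have "0 < N" using N2 by simp
  have "{\<bar>om t j - om t i\<bar> | i j. i < N \<and> j < N}
      = (\<lambda>p. \<bar>om t (snd p) - om t (fst p)\<bar>) ` ({..<N} \<times> {..<N})" for t
    by force
  moreover have "((\<lambda>t. Max ((\<lambda>p. \<bar>om t (snd p) - om t (fst p)\<bar>) ` ({..<N} \<times> {..<N}))) \<longlongrightarrow> 0) at_top"
    using \<open>0 < N\<close> om_diff_tendsto_0
    by (intro tendsto_Max_abs_zero[where f = "\<lambda>p t. om t (snd p) - om t (fst p)"]) auto
  moreover have "{\<bar>om t i\<bar> | i. i < N} = (\<lambda>i. \<bar>om t i\<bar>) ` {..<N}" for t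
    by auto
  moreover have "(\<Sum>i<N. om 0 i) = 0 \<Longrightarrow> ((\<lambda>t. Max ((\<lambda>i. \<bar>om t i\<bar>) ` {..<N})) \<longlongrightarrow> 0) at_top"
    using \<open>0 < N\<close> om_tendsto_0 by (intro tendsto_Max_abs_zero[where f = "\<lambda>i t. om t i"]) auto
  ultimately show ?thesis by simp
qed

end
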